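(* Let $\mathcal C$ be a Markov category that has conditionals and precise supports. Then the relation $\sim$ on states $I \leadsto X$ of $\mathrm{Obs}(\mathcal C)$ is a functorial equivalence relation. That is, it is an equivalence relation, and for all states $(K,\psi,o),(K',\psi',o') : I\leadsto X$ with $(K,\psi,o)\sim(K',\psi',o')$ and every morphism $(H,f,v):X\leadsto Y$ of $\mathrm{Obs}(\mathcal C)$ we have \[(H\otimes K,(f\otimes \mathrm{id}_K)\psi, v\otimes o)\ \sim\ (H\otimes K',(f\otimes\mathrm{id}_{K'})\psi', v\otimes o').\]
   Context: A Markov category is a symmetric monoidal category $(\mathcal C,\otimes,I)$ (assumed strict monoidal) in which every object $X$ carries a commutative comonoid $\mathrm{copy}_X:X\to X\otimes X$, $\mathrm{del}_X:X\to I$, compatible with $\otimes$ (i.e. $\mathrm{copy}_{X\otimes Y}$, $\mathrm{del}_{X\otimes Y}$ are obtained from those of $X$ and $Y$ using the symmetry), and in which $I$ is terminal. Write $gf$ for $g\circ f$. A morphism $f:X\to Y$ is deterministic if $\mathrm{copy}_Y f=(f\otimes f)\mathrm{copy}_X$. For $f:A\to X$, $g:A\to Y$ put $\langle f,g\rangle=(f\otimes g)\mathrm{copy}_A$. For $f:A\to X\otimes Y$ the marginals are $f_X=(\mathrm{id}_X\otimes\mathrm{del}_Y)f$ and $f_Y=(\mathrm{del}_X\otimes \mathrm{id}_Y)f$. A state is a morphism $I\to X$. A conditional of $f:A\to X\otimes Y$ with respect to $X$ is a morphism $f|_X:X\otimes A\to Y$ with $f=(\mathrm{id}_X\otimes f|_X)(\mathrm{copy}_X\otimes\mathrm{id}_A)(f_X\otimes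 \mathrm{id}_A)\mathrm{copy}_A$ (for a state $\psi:I\to X\otimes Y$: $\psi=\langle\mathrm{id}_X,\psi|_X\rangle\psi_X$); conditionals with respect to $Y$ are defined symmetrically; $\mathcal C$ has conditionals if all such conditionals exist. For a state $\mu:I\to X$ and $f,g:X\to Y$, write $f=_\mu g$ if $\langle\mathrm{id}_X,f\rangle\mu=\langle\mathrm{id}_X,g\rangle\mu$. For states $\mu,\nu:I\to X$, $\mu\ll\nu$ means: for all $Y$ and all $f,g:X\to Y$, $f=_\nu g$ implies $f=_\mu g$. $\mathcal C$ has precise supports if for all deterministic $x:I\to X$, $y:I\to Y$, all $f:X\to Y$ and all $\mu:I\to X$: $x\otimes y\ll\langle\mathrm{id}_X,f\rangle\mu$ iff ($x\ll\mu$ and $y\ll fx$). The category $\mathrm{Obs}(\mathcal C)$ has the objects of $\mathcal C$; a morphism $X\leadsto Y$ is a triple $(K,f,o)$ with $K$ an object, $f:X\to Y\otimes K$ in $\mathcal C$ and $o:I\to K$ deterministic; identities are $(I,\mathrm{id}_X,\mathrm{id}_I)$; composition is $(K',f',o')\bullet(K,f,o)=(K'\otimes K,(f'\otimes\mathrm{id}_K)f,o'\otimes o)$; the tensor of $(K,f,o):X\leadsto Y$ and $(K',f',o'):X'\leadsto Y'$ is $(K'\otimes K,(\mathrm{id}_{Y'}\otimes\mathrm{swap}_{K',Y}\otimes \mathrm{id}_K)(f'\otimes f),o'\otimes o)$ (order of factors as written). A state $(K,\psi,o):I\leadsto X$ (so $\psi:I\to X\otimes K$) is an inference problem; it succeeds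 if $o\ll\psi_K$, in which case its posterior is $\psi|_K\, o:I\to X$, where $\psi|_K:K\to X$ is a conditional of $\psi$ with respect to $K$. Define $(K,\psi,o)\sim(K',\psi',o')$ iff either ($o\ll\psi_K$, $o'\ll\psi'_{K'}$ and $\psi|_K o=\psi'|_{K'}o'$) or ($o\not\ll\psi_K$ and $o'\not\ll\psi'_{K'}$). *)

theory Defs
  imports Main
begin

text \<open>A (strict) symmetric monoidal category with explicit hom-sets, given as a
record of data; the axioms of a Markov category are collected in markov_cat.
cmp g f is the composite g after f.\<close>

record ('o, 'm) mcat =
  Ob  :: "'o set"
  Hom :: "'o \<Rightarrow> 'o \<Rightarrow> 'm set"
  cmp :: "'m \<Rightarrow> 'm \<Rightarrow> 'm"
  idm :: "'o \<Rightarrow> 'm"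
  tob :: "'o \<Rightarrow> 'o \<Rightarrow> 'o"
  tm  :: "'m \<Rightarrow> 'm \<Rightarrow> 'm"
  unt :: "'o"
  swp :: "'o \<Rightarrow> 'o \<Rightarrow> 'm"
  cpy :: "'o \<Rightarrow> 'm"
  dl  :: "'o \<Rightarrow> 'm"

definition category :: "('o,'m) mcat \<Rightarrow> bool" where
  "category C \<longleftrightarrow>
     (\<forall>A B f. f \<in> Hom C A B \<longrightarrow> A \<in> Ob C \<and> B \<in> Ob C) \<and>
     (\<forall>A B A' B' f. f \<in> Hom C A B \<longrightarrow> f \<in> Hom C A' B' \<longrightarrow> A = A' \<and> B = B') \<and>
     (\<forall>A\<in>Ob C. idm C A \<in> Hom C A A) \<and>
     (\<forall>A B D f g. f \<in> Hom C A B \<longrightarrow> g \<in> Hom C B D \<longrightarrow> cmp C g f \<in> Hom C A D) \<and>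
     (\<forall>A B D E f g h. f \<in> Hom C A B \<longrightarrow> g \<in> Hom C B D \<longrightarrow> h \<in> Hom C D E \<longrightarrow>
        cmp C h (cmp C g f) = cmp C (cmp C h g) f) \<and>
     (\<forall>A B f. f \<in> Hom C A B \<longrightarrow> cmp C (idm C B) f = f \<and> cmp C f (idm C A) = f)"

definition strict_monoidal :: "('o,'m) mcat \<Rightarrow> bool" where
  "strict_monoidal C \<longleftrightarrow>
     unt C \<in> Ob C \<and>
     (\<forall>A\<in>Ob C. \<forall>B\<in>Ob C. tob C A B \<in> Ob C) \<and>
     (\<forall>A B A' B' f g. f \<in> Hom C A B \<longrightarrow> g \<in> Hom C A' B' \<longrightarrow>
        tm C f g \<in> Hom C (tob C A A') (tob C B B')) \<and>
     (\<forall>A B D A' B' D' f g f' g'. f \<in> Hom C A B \<longrightarrow> g \<in> Hom C B D \<longrightarrow>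
        f' \<in> Hom C A' B' \<longrightarrow> g' \<in> Hom C B' D' \<longrightarrow>
        tm C (cmp C g f) (cmp C g' f') = cmp C (tm C g g') (tm C f f')) \<and>
     (\<forall>A\<in>Ob C. \<forall>B\<in>Ob C. tm C (idm C A) (idm C B) = idm C (tob C A B)) \<and>
     (\<forall>A\<in>Ob C. \<forall>B\<in>Ob C. \<forall>D\<in>Ob C. tob C (tob C A B) D = tob C A (tob C B D)) \<and>
     (\<forall>A B A' B' A'' B'' f g h. f \<in> Hom C A B \<longrightarrow> g \<in> Hom C A' B' \<longrightarrow> h \<in> Hom C A'' B'' \<longrightarrow>
        tm C (tm C f g) h = tm C f (tm C g h)) \<and>
     (\<forall>A\<in>Ob C. tob C (unt C) A = A \<and> tob C A (unt C) = A) \<and>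
     (\<forall>A B f. f \<in> Hom C A B \<longrightarrow> tm C (idm C (unt C)) f = f \<and> tm C f (idm C (unt C)) = f)"

definition symmetric :: "('o,'m) mcat \<Rightarrow> bool" where
  "symmetric C \<longleftrightarrow>
     (\<forall>A\<in>Ob C. \<forall>B\<in>Ob C. swp C A B \<in> Hom C (tob C A B) (tob C B A)) \<and>
     (\<forall>A B A' B' f g. f \<in> Hom C A B \<longrightarrow> g \<in> Hom C A' B' \<longrightarrow>
        cmp C (swp C B B') (tm C f g) = cmp C (tm C g f) (swp C A A')) \<and>
     (\<forall>A\<in>Ob C. \<forall>B\<in>Ob C. cmp C (swp C B A) (swp C A B) = idm C (tob C A B)) \<and>
     (\<forall>A\<in>Ob C. \<forall>B\<in>Ob C. \<forall>D\<in>Ob C.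
        swp C A (tob C B D) = cmp C (tm C (idm C B) (swp C A D)) (tm C (swp C A B) (idm C D)))"

definition markov_cat :: "('o,'m) mcat \<Rightarrow> bool" where
  "markov_cat C \<longleftrightarrow> category C \<and> strict_monoidal C \<and> symmetric C \<and>
     (\<forall>X\<in>Ob C. cpy C X \<in> Hom C X (tob C X X) \<and> dl C X \<in> Hom C X (unt C)) \<and>
     (\<forall>X\<in>Ob C. cmp C (tm C (dl C X) (idm C X)) (cpy C X) = idm C X \<and>
                cmp C (tm C (idm C X) (dl C X)) (cpy C X) = idm C X) \<and>
     (\<forall>X\<in>Ob C. cmp C (tm C (cpy C X) (idm C X)) (cpy C X) =
                cmp C (tm C (idm C X) (cpy C X)) (cpy C X)) \<and>
     (\<forall>X\<in>Ob C. cmp C (swp C X X) (cpy C X) = cpy C X) \<and>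
     (\<forall>X\<in>Ob C. \<forall>Y\<in>Ob C. cpy C (tob C X Y) =
        cmp C (tm C (tm C (idm C X) (swp C X Y)) (idm C Y)) (tm C (cpy C X) (cpy C Y))) \<and>
     (\<forall>X\<in>Ob C. \<forall>Y\<in>Ob C. dl C (tob C X Y) = tm C (dl C X) (dl C Y)) \<and>
     (\<forall>A f. f \<in> Hom C A (unt C) \<longrightarrow> f = dl C A)"

definition deterministic :: "('o,'m) mcat \<Rightarrow> 'o \<Rightarrow> 'o \<Rightarrow> 'm \<Rightarrow> bool" where
  "deterministic C X Y f \<longleftrightarrow> f \<in> Hom C X Y \<and>
     cmp C (cpy C Y) f = cmp C (tm C f f) (cpy C X)"

definition pair :: "('o,'m) mcat \<Rightarrow> 'o \<Rightarrow> 'm \<Rightarrow> 'm \<Rightarrow> 'm" where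
  "pair C A f g = cmp C (tm C f g) (cpy C A)"

definition margL :: "('o,'m) mcat \<Rightarrow> 'o \<Rightarrow> 'o \<Rightarrow> 'm \<Rightarrow> 'm" where
  "margL C X Y f = cmp C (tm C (idm C X) (dl C Y)) f"

definition margR :: "('o,'m) mcat \<Rightarrow> 'o \<Rightarrow> 'o \<Rightarrow> 'm \<Rightarrow> 'm" where
  "margR C X Y f = cmp C (tm C (dl C X) (idm C Y)) f"

text \<open>c is a conditional of f : A \<rightarrow> X \<otimes> Y with respect to X (c : X \<otimes> A \<rightarrow> Y).\<close>
definition is_condL :: "('o,'m) mcat \<Rightarrow> 'o \<Rightarrow> 'o \<Rightarrow> 'o \<Rightarrow> 'm \<Rightarrow> 'm \<Rightarrow> bool" where
  "is_condL C A X Y f c \<longleftrightarrow> c \<in> Hom C (tob C X A) Y \<and>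
     f = cmp C (tm C (idm C X) c)
           (cmp C (tm C (cpy C X) (idm C A))
             (cmp C (tm C (margL C X Y f) (idm C A)) (cpy C A)))"

definition is_condR :: "('o,'m) mcat \<Rightarrow> 'o \<Rightarrow> 'o \<Rightarrow> 'o \<Rightarrow> 'm \<Rightarrow> 'm \<Rightarrow> bool" where
  "is_condR C A X Y f c \<longleftrightarrow> is_condL C A Y X (cmp C (swp C X Y) f) c"

definition has_conditionals :: "('o,'m) mcat \<Rightarrow> bool" where
  "has_conditionals C \<longleftrightarrow>
     (\<forall>A\<in>Ob C. \<forall>X\<in>Ob C. \<forall>Y\<in>Ob C. \<forall>f\<in>Hom C A (tob C X Y).
        (\<exists>c. is_condL C A X Y f c) \<and> (\<exists>c. is_condR C A X Y f c))"

definition as_eq :: "('o,'m) mcat \<Rightarrow> 'o \<Rightarrow> 'm \<Rightarrow> 'm \<Rightarrow> 'm \<Rightarrow> bool" where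
  "as_eq C X \<mu> f g \<longleftrightarrow> cmp C (pair C X (idm C X) f) \<mu> = cmp C (pair C X (idm C X) g) \<mu>"

definition abs_cont :: "('o,'m) mcat \<Rightarrow> 'o \<Rightarrow> 'm \<Rightarrow> 'm \<Rightarrow> bool" where
  "abs_cont C X \<mu> \<nu> \<longleftrightarrow>
     (\<forall>Y\<in>Ob C. \<forall>f\<in>Hom C X Y. \<forall>g\<in>Hom C X Y. as_eq C X \<nu> f g \<longrightarrow> as_eq C X \<mu> f g)"

definition precise_supports :: "('o,'m) mcat \<Rightarrow> bool" where
  "precise_supports C \<longleftrightarrow>
     (\<forall>X\<in>Ob C. \<forall>Y\<in>Ob C. \<forall>x y f \<mu>.
        deterministic C (unt C) X x \<longrightarrow> deterministic C (unt C) Y y \<longrightarrow>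
        f \<in> Hom C X Y \<longrightarrow> \<mu> \<in> Hom C (unt C) X \<longrightarrow>
        (abs_cont C (tob C X Y) (tm C x y) (cmp C (pair C X (idm C X) f) \<mu>)
          \<longleftrightarrow> abs_cont C X x \<mu> \<and> abs_cont C Y y (cmp C f x)))"

definition obs_hom :: "('o,'m) mcat \<Rightarrow> 'o \<Rightarrow> 'o \<Rightarrow> ('o \<times> 'm \<times> 'm) set" where
  "obs_hom C X Y = {(K, f, ob). K \<in> Ob C \<and> f \<in> Hom C X (tob C Y K) \<and> deterministic C (unt C) K ob}"

definition obs_comp :: "('o,'m) mcat \<Rightarrow> 'o \<Rightarrow> 'o \<times> 'm \<times> 'm \<Rightarrow> 'o \<times> 'm \<times> 'm \<Rightarrow> 'o \<times> 'm \<times> 'm" where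
  "obs_comp C Y g h = (case g of (K', f', ob') \<Rightarrow> case h of (K, f, ob) \<Rightarrow>
       (tob C K' K, cmp C (tm C f' (idm C K)) f, tm C ob' ob))"

definition succeeds :: "('o,'m) mcat \<Rightarrow> 'o \<Rightarrow> 'o \<times> 'm \<times> 'm \<Rightarrow> bool" where
  "succeeds C X p = (case p of (K, \<psi>, ob) \<Rightarrow> abs_cont C K ob (margR C X K \<psi>))"

text \<open>The relation \<sim>; the posterior \<psi>|_K o is formed with (any) conditional
\<psi>|_K : K \<rightarrow> X of \<psi> with respect to K.\<close>
definition obs_sim :: "('o,'m) mcat \<Rightarrow> 'o \<Rightarrow> 'o \<times> 'm \<times> 'm \<Rightarrow> 'o \<times> 'm \<times> 'm \<Rightarrow> bool" where
  "obs_sim C X p q = (case p of (K, \<psi>, ob) \<Rightarrow> case q of (K', \<psi>', ob') \<Rightarrow>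
     (succeeds C X p \<and> succeeds C X q \<and>
        (\<forall>c c'. is_condR C (unt C) X K \<psi> c \<longrightarrow> is_condR C (unt C) X K' \<psi>' c' \<longrightarrow>
             cmp C c ob = cmp C c' ob'))
     \<or> (\<not> succeeds C X p \<and> \<not> succeeds C X q))"

end

theory Submission
  imports Defs
begin

text \<open>Given a conditional c of \<psi> with respect to K, the posterior of (K, \<psi>, o) is c o; if o \<ll> \<psi>_K
it does not depend on the choice of c, because conditionals are unique \<psi>_K-almost surely, so
\<sim> compares success and posteriors and is an equivalence relation.

For functoriality along (H, f, v) let e be a conditional of f c : K \<rightarrow> Y \<otimes> H with respect to H.
Then e is a conditional of the composite (f \<otimes> id) \<psi> with respect to H \<otimes> K, and e (id \<otimes> o) is a
conditional of the state f c o with respect to H. The marginal of the composite on H \<otimes> K is, up to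
the swap, \<langle>id, (f c)_H\<rangle> \<psi>_K, so precise supports say that the composite succeeds iff (K, \<psi>, o)
succeeds and v \<ll> (f c o)_H; its posterior is then e (v \<otimes> o) = e (id \<otimes> o) v, the posterior of
(H, f c o, v). Both depend on (K, \<psi>, o) only through its posterior c o.\<close>

locale markov_category =
  fixes C :: "('o,'m) mcat"
  assumes markov: "markov_cat C"
begin

abbreviation cat_comp (infixr "\<cdot>" 55) where "g \<cdot> f \<equiv> cmp C g f"
abbreviation tensor (infixr "\<otimes>" 60) where "f \<otimes> g \<equiv> tm C f g"
abbreviation tensor_ob (infixr "\<odot>" 60) where "A \<odot> B \<equiv> tob C A B"
abbreviation I where "I \<equiv> unt C"
abbreviation ide where "ide A \<equiv> idm C A"
abbreviation \<sigma> where "\<sigma> A B \<equiv> swp C A B"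
abbreviation copy where "copy A \<equiv> cpy C A"
abbreviation del where "del A \<equiv> dl C A"
abbreviation hom where "hom A B \<equiv> Hom C A B"
abbreviation obj where "obj \<equiv> Ob C"

lemma category: "category C" and strict_monoidal: "strict_monoidal C" and symmetric: "symmetric C"
  using markov unfolding markov_cat_def by auto

lemma hom_objs: "f \<in> hom A B \<Longrightarrow> A \<in> obj \<and> B \<in> obj"
  using category unfolding category_def by auto

lemma hom_unique: "f \<in> hom A B \<Longrightarrow> f \<in> hom A' B' \<Longrightarrow> A = A' \<and> B = B'"
  using category unfolding category_def by auto

lemma unit_obj [intro, simp]: "I \<in> obj"
  and tensor_in_obj [intro, simp]: "A \<in> obj \<Longrightarrow> B \<in> obj \<Longrightarrow> A \<odot> B \<in> obj"
  using strict_monoidal unfolding strict_monoidal_def by auto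

lemma ide_in_hom [intro]: "A \<in> obj \<Longrightarrow> ide A \<in> hom A A"
  and comp_in_hom [intro]: "f \<in> hom A B \<Longrightarrow> g \<in> hom B D \<Longrightarrow> g \<cdot> f \<in> hom A D"
  using category unfolding category_def by auto

lemma tensor_in_hom [intro]: "f \<in> hom A B \<Longrightarrow> g \<in> hom A' B' \<Longrightarrow> f \<otimes> g \<in> hom (A \<odot> A') (B \<odot> B')"
  using strict_monoidal unfolding strict_monoidal_def by auto

lemma swap_in_hom [intro]: "A \<in> obj \<Longrightarrow> B \<in> obj \<Longrightarrow> \<sigma> A B \<in> hom (A \<odot> B) (B \<odot> A)"
  using symmetric unfolding symmetric_def by auto

lemma copy_in_hom [intro]: "A \<in> obj \<Longrightarrow> copy A \<in> hom A (A \<odot> A)"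
  and del_in_hom [intro]: "A \<in> obj \<Longrightarrow> del A \<in> hom A I"
  using markov unfolding markov_cat_def by auto

text \<open>A morphism lies in at most one hom-set, so domain and codomain are functions of it. Stating
the axioms with side conditions on arr, dom and cod lets the simplifier discharge the typing.\<close>

definition arr where "arr f \<longleftrightarrow> (\<exists>A B. f \<in> hom A B)"
definition dom where "dom f = (THE A. \<exists>B. f \<in> hom A B)"
definition cod where "cod f = (THE B. \<exists>A. f \<in> hom A B)"

lemma in_homD:
  assumes "f \<in> hom A B"
  shows "arr f" "dom f = A" "cod f = B"
  using assms hom_unique unfolding arr_def dom_def cod_def by blast+

lemma arr_in_hom: "arr f \<Longrightarrow> f \<in> hom (dom f) (cod f)"
  using in_homD arr_def by metis

lemma in_homI: "arr f \<Longrightarrow> dom f = A \<Longrightarrow> cod f = B \<Longrightarrow> f \<in> hom A B"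
  using arr_in_hom by blast

lemma dom_obj [simp]: "arr f \<Longrightarrow> dom f \<in> obj"
  and cod_obj [simp]: "arr f \<Longrightarrow> cod f \<in> obj"
  using arr_in_hom hom_objs by blast+

lemma arr_ide [simp]: "A \<in> obj \<Longrightarrow> arr (ide A)"
  and dom_ide [simp]: "A \<in> obj \<Longrightarrow> dom (ide A) = A"
  and cod_ide [simp]: "A \<in> obj \<Longrightarrow> cod (ide A) = A"
  using in_homD[OF ide_in_hom] by auto

lemma arr_comp [simp]: "arr f \<Longrightarrow> arr g \<Longrightarrow> cod f = dom g \<Longrightarrow> arr (g \<cdot> f)"
  and dom_comp [simp]: "arr f \<Longrightarrow> arr g \<Longrightarrow> cod f = dom g \<Longrightarrow> dom (g \<cdot> f) = dom f"
  and cod_comp [simp]: "arr f \<Longrightarrow> arr g \<Longrightarrow> cod f = dom g \<Longrightarrow> cod (g \<cdot> f) = cod g"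
  using in_homD[OF comp_in_hom[OF arr_in_hom[of f]]] arr_in_hom[of g] by metis+

lemma arr_tensor [simp]: "arr f \<Longrightarrow> arr g \<Longrightarrow> arr (f \<otimes> g)"
  and dom_tensor [simp]: "arr f \<Longrightarrow> arr g \<Longrightarrow> dom (f \<otimes> g) = dom f \<odot> dom g"
  and cod_tensor [simp]: "arr f \<Longrightarrow> arr g \<Longrightarrow> cod (f \<otimes> g) = cod f \<odot> cod g"
  using in_homD[OF tensor_in_hom[OF arr_in_hom arr_in_hom]] by metis+

lemma arr_swap [simp]: "A \<in> obj \<Longrightarrow> B \<in> obj \<Longrightarrow> arr (\<sigma> A B)"
  and dom_swap [simp]: "A \<in> obj \<Longrightarrow> B \<in> obj \<Longrightarrow> dom (\<sigma> A B) = A \<odot> B"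
  and cod_swap [simp]: "A \<in> obj \<Longrightarrow> B \<in> obj \<Longrightarrow> cod (\<sigma> A B) = B \<odot> A"
  using in_homD[OF swap_in_hom] by auto

lemma arr_copy [simp]: "A \<in> obj \<Longrightarrow> arr (copy A)"
  and dom_copy [simp]: "A \<in> obj \<Longrightarrow> dom (copy A) = A"
  and cod_copy [simp]: "A \<in> obj \<Longrightarrow> cod (copy A) = A \<odot> A"
  using in_homD[OF copy_in_hom] by auto

lemma arr_del [simp]: "A \<in> obj \<Longrightarrow> arr (del A)"
  and dom_del [simp]: "A \<in> obj \<Longrightarrow> dom (del A) = A"
  and cod_del [simp]: "A \<in> obj \<Longrightarrow> cod (del A) = I"
  using in_homD[OF del_in_hom] by auto

lemma comp_assoc [simp]:
  "arr f \<Longrightarrow> arr g \<Longrightarrow> arr h \<Longrightarrow> cod f = dom g \<Longrightarrow> cod g = dom h \<Longrightarrow> (h \<cdot> g) \<cdot> f = h \<cdot> (g \<cdot> f)"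
  using category arr_in_hom[of f] arr_in_hom[of g] arr_in_hom[of h] unfolding category_def by auto

lemma comp_ide_left [simp]: "arr f \<Longrightarrow> B = cod f \<Longrightarrow> ide B \<cdot> f = f"
  and comp_ide_right [simp]: "arr f \<Longrightarrow> A = dom f \<Longrightarrow> f \<cdot> ide A = f"
  using category arr_in_hom[of f] unfolding category_def by auto

lemma interchange:
  "arr f \<Longrightarrow> arr g \<Longrightarrow> arr f' \<Longrightarrow> arr g' \<Longrightarrow> cod f = dom g \<Longrightarrow> cod f' = dom g' \<Longrightarrow>
   (g \<cdot> f) \<otimes> (g' \<cdot> f') = (g \<otimes> g') \<cdot> (f \<otimes> f')"
  using strict_monoidal arr_in_hom[of f] arr_in_hom[of g] arr_in_hom[of f'] arr_in_hom[of g']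
  unfolding strict_monoidal_def by auto

lemma tensor_ide [simp]: "A \<in> obj \<Longrightarrow> B \<in> obj \<Longrightarrow> ide A \<otimes> ide B = ide (A \<odot> B)"
  and tensor_ob_assoc [simp]: "A \<in> obj \<Longrightarrow> B \<in> obj \<Longrightarrow> D \<in> obj \<Longrightarrow> (A \<odot> B) \<odot> D = A \<odot> (B \<odot> D)"
  and tensor_ob_unit [simp]: "A \<in> obj \<Longrightarrow> I \<odot> A = A" "A \<in> obj \<Longrightarrow> A \<odot> I = A"
  using strict_monoidal unfolding strict_monoidal_def by auto

lemma tensor_assoc [simp]: "arr f \<Longrightarrow> arr g \<Longrightarrow> arr h \<Longrightarrow> (f \<otimes> g) \<otimes> h = f \<otimes> (g \<otimes> h)"
  using strict_monoidal arr_in_hom[of f] arr_in_hom[of g] arr_in_hom[of h]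
  unfolding strict_monoidal_def by auto

lemma tensor_unit_left [simp]: "arr f \<Longrightarrow> ide I \<otimes> f = f"
  and tensor_unit_right [simp]: "arr f \<Longrightarrow> f \<otimes> ide I = f"
  using strict_monoidal arr_in_hom[of f] unfolding strict_monoidal_def by auto

lemma swap_natural:
  "arr f \<Longrightarrow> arr g \<Longrightarrow> B = cod f \<Longrightarrow> B' = cod g \<Longrightarrow>
   \<sigma> B B' \<cdot> (f \<otimes> g) = (g \<otimes> f) \<cdot> \<sigma> (dom f) (dom g)"
  using symmetric arr_in_hom[of f] arr_in_hom[of g] unfolding symmetric_def by auto

lemma swap_inverse [simp]: "A \<in> obj \<Longrightarrow> B \<in> obj \<Longrightarrow> \<sigma> B A \<cdot> \<sigma> A B = ide (A \<odot> B)"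
  and swap_tensor_right:
    "A \<in> obj \<Longrightarrow> B \<in> obj \<Longrightarrow> D \<in> obj \<Longrightarrow> \<sigma> A (B \<odot> D) = (ide B \<otimes> \<sigma> A D) \<cdot> (\<sigma> A B \<otimes> ide D)"
  using symmetric unfolding symmetric_def by auto

lemma copy_counit_left: "X \<in> obj \<Longrightarrow> (del X \<otimes> ide X) \<cdot> copy X = ide X"
  and copy_coassoc: "X \<in> obj \<Longrightarrow> (copy X \<otimes> ide X) \<cdot> copy X = (ide X \<otimes> copy X) \<cdot> copy X"
  and copy_comm [simp]: "X \<in> obj \<Longrightarrow> \<sigma> X X \<cdot> copy X = copy X"
  and terminal_unit: "f \<in> hom A I \<Longrightarrow> f = del A"
  using markov unfolding markov_cat_def by auto

lemma copy_tensor: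
  assumes "X \<in> obj" "Y \<in> obj"
  shows "copy (X \<odot> Y) = (ide X \<otimes> \<sigma> X Y \<otimes> ide Y) \<cdot> (copy X \<otimes> copy Y)"
proof -
  have "copy (X \<odot> Y) = ((ide X \<otimes> \<sigma> X Y) \<otimes> ide Y) \<cdot> (copy X \<otimes> copy Y)"
    using markov assms unfolding markov_cat_def by auto
  then show ?thesis
    using assms by simp
qed

lemma comp_reduce:
  "a \<cdot> b = c \<Longrightarrow> arr a \<Longrightarrow> arr b \<Longrightarrow> arr k \<Longrightarrow> cod b = dom a \<Longrightarrow> cod k = dom b \<Longrightarrow>
   a \<cdot> (b \<cdot> k) = c \<cdot> k"
  by (metis comp_assoc)

lemma tensor_comp:
  "arr f \<Longrightarrow> arr g \<Longrightarrow> arr f' \<Longrightarrow> arr g' \<Longrightarrow> cod f = dom g \<Longrightarrow> cod f' = dom g' \<Longrightarrow>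
   (g \<otimes> g') \<cdot> (f \<otimes> f') = (g \<cdot> f) \<otimes> (g' \<cdot> f')"
  by (simp add: interchange)

lemma tensor_comp_reduce:
  "arr f \<Longrightarrow> arr g \<Longrightarrow> arr f' \<Longrightarrow> arr g' \<Longrightarrow> cod f = dom g \<Longrightarrow> cod f' = dom g' \<Longrightarrow>
   arr k \<Longrightarrow> cod k = dom f \<odot> dom f' \<Longrightarrow>
   (g \<otimes> g') \<cdot> ((f \<otimes> f') \<cdot> k) = ((g \<cdot> f) \<otimes> (g' \<cdot> f')) \<cdot> k"
  by (simp add: interchange del: comp_assoc) (metis comp_assoc arr_tensor dom_tensor cod_tensor)

lemma ide_tensor_comp:
  "arr f \<Longrightarrow> arr g \<Longrightarrow> cod f = dom g \<Longrightarrow> X \<in> obj \<Longrightarrow> ide X \<otimes> (g \<cdot> f) = (ide X \<otimes> g) \<cdot> (ide X \<otimes> f)"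
  using interchange[of "ide X" "ide X" f g] by simp

lemma comp_tensor_ide:
  "arr f \<Longrightarrow> arr g \<Longrightarrow> cod f = dom g \<Longrightarrow> X \<in> obj \<Longrightarrow> (g \<cdot> f) \<otimes> ide X = (g \<otimes> ide X) \<cdot> (f \<otimes> ide X)"
  using interchange[of f g "ide X" "ide X"] by simp

lemma ide_tensor_ide_tensor [simp]:
  "A \<in> obj \<Longrightarrow> B \<in> obj \<Longrightarrow> arr f \<Longrightarrow> ide A \<otimes> (ide B \<otimes> f) = ide (A \<odot> B) \<otimes> f"
  by (metis tensor_assoc tensor_ide arr_ide)

lemma swap_inverse_reduce [simp]:
  "A \<in> obj \<Longrightarrow> B \<in> obj \<Longrightarrow> arr k \<Longrightarrow> cod k = A \<odot> B \<Longrightarrow> \<sigma> B A \<cdot> (\<sigma> A B \<cdot> k) = k"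
  by (simp add: comp_reduce[OF swap_inverse])

lemma copy_comm_reduce [simp]:
  "X \<in> obj \<Longrightarrow> arr k \<Longrightarrow> cod k = X \<Longrightarrow> \<sigma> X X \<cdot> (copy X \<cdot> k) = copy X \<cdot> k"
  by (simp add: comp_reduce[OF copy_comm])

lemma copy_coassoc_reduce:
  "X \<in> obj \<Longrightarrow> arr k \<Longrightarrow> cod k = X \<Longrightarrow> (copy X \<otimes> ide X) \<cdot> (copy X \<cdot> k) = (ide X \<otimes> copy X) \<cdot> (copy X \<cdot> k)"
  using comp_reduce[OF copy_coassoc] by simp

lemma tensor_slide:
  "arr f \<Longrightarrow> arr g \<Longrightarrow> f \<otimes> g = (ide (cod f) \<otimes> g) \<cdot> (f \<otimes> ide (dom g))"
  using interchange[of f "ide (cod f)" "ide (dom g)" g] by simp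

lemma state_tensor_in_hom: "x \<in> hom I A \<Longrightarrow> y \<in> hom I B \<Longrightarrow> x \<otimes> y \<in> hom I (A \<odot> B)"
  using tensor_in_hom[of x I A y I B] by simp

lemma tensor_states: "f \<in> hom I B \<Longrightarrow> g \<in> hom I B' \<Longrightarrow> f \<otimes> g = (ide B \<otimes> g) \<cdot> f"
  using tensor_slide[of f g] in_homD[of f I B] in_homD[of g I B'] by simp

lemma copy_unit [simp]: "copy I = ide I"
  and del_unit [simp]: "del I = ide I"
  using terminal_unit[of "copy I" I] copy_in_hom[OF unit_obj] terminal_unit[OF ide_in_hom[OF unit_obj]]
  by simp_all

lemma swap_unit_right [simp]: "A \<in> obj \<Longrightarrow> \<sigma> A I = ide A"
proof -
  assume A: "A \<in> obj"
  have idem: "\<sigma> A I \<cdot> \<sigma> A I = \<sigma> A I"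
    using swap_tensor_right[OF A unit_obj unit_obj] A by simp
  have "\<sigma> A I = \<sigma> I A \<cdot> (\<sigma> A I \<cdot> \<sigma> A I)"
    using A by simp
  also have "\<dots> = \<sigma> I A \<cdot> \<sigma> A I"
    by (simp only: idem)
  also have "\<dots> = ide A"
    using A by simp
  finally show ?thesis .
qed

lemma swap_unit_left [simp]: "A \<in> obj \<Longrightarrow> \<sigma> I A = ide A"
  using swap_inverse[of A I] by simp

lemma swap_tensor_left:
  assumes A: "A \<in> obj" and B: "B \<in> obj" and D: "D \<in> obj"
  shows "\<sigma> (A \<odot> B) D = (\<sigma> A D \<otimes> ide B) \<cdot> (ide A \<otimes> \<sigma> B D)"
proof -
  let ?R = "(\<sigma> A D \<otimes> ide B) \<cdot> (ide A \<otimes> \<sigma> B D)"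
  have "?R \<cdot> \<sigma> D (A \<odot> B) = (\<sigma> A D \<otimes> ide B) \<cdot> ((ide A \<otimes> \<sigma> B D) \<cdot> (ide A \<otimes> \<sigma> D B)) \<cdot> (\<sigma> D A \<otimes> ide B)"
    using A B D by (simp add: swap_tensor_right)
  also have "\<dots> = ide (D \<odot> A \<odot> B)"
    using A B D by (simp add: tensor_comp)
  finally have "?R \<cdot> \<sigma> D (A \<odot> B) = ide (D \<odot> A \<odot> B)" .
  then have "\<sigma> (A \<odot> B) D = (?R \<cdot> \<sigma> D (A \<odot> B)) \<cdot> \<sigma> (A \<odot> B) D"
    using A B D by simp
  also have "\<dots> = ?R"
    using A B D by simp
  finally show ?thesis .
qed

lemma swap_deterministic:
  assumes A: "A \<in> obj" and B: "B \<in> obj"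
  shows "copy (B \<odot> A) \<cdot> \<sigma> A B = (\<sigma> A B \<otimes> \<sigma> A B) \<cdot> copy (A \<odot> B)"
proof -
  have "copy (B \<odot> A) \<cdot> \<sigma> A B = (ide B \<otimes> \<sigma> B A \<otimes> ide A) \<cdot> \<sigma> (A \<odot> A) (B \<odot> B) \<cdot> (copy A \<otimes> copy B)"
    using A B swap_natural[of "copy A" "copy B" "A \<odot> A" "B \<odot> B"] by (simp add: copy_tensor)
  also have "\<dots> = (ide B \<otimes> \<sigma> B A \<otimes> ide A) \<cdot> (ide B \<otimes> ((\<sigma> A B \<otimes> ide A) \<cdot> (ide A \<otimes> \<sigma> A B))) \<cdot>
        (((\<sigma> A B \<otimes> ide A) \<cdot> (ide A \<otimes> \<sigma> A B)) \<otimes> ide B) \<cdot> (copy A \<otimes> copy B)"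
    using A B by (simp add: swap_tensor_right swap_tensor_left)
  also have "\<dots> = (ide B \<otimes> \<sigma> B A \<otimes> ide A) \<cdot> (ide B \<otimes> \<sigma> A B \<otimes> ide A) \<cdot> (ide B \<otimes> ide A \<otimes> \<sigma> A B) \<cdot>
        (\<sigma> A B \<otimes> ide A \<otimes> ide B) \<cdot> (ide A \<otimes> \<sigma> A B \<otimes> ide B) \<cdot> (copy A \<otimes> copy B)"
    using A B by (simp add: ide_tensor_comp comp_tensor_ide)
  also have "\<dots> = (\<sigma> A B \<otimes> \<sigma> A B) \<cdot> (ide A \<otimes> \<sigma> A B \<otimes> ide B) \<cdot> (copy A \<otimes> copy B)"
    using A B by (simp add: tensor_comp_reduce tensor_comp)
  also have "\<dots> = (\<sigma> A B \<otimes> \<sigma> A B) \<cdot> copy (A \<odot> B)"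
    using A B by (simp add: copy_tensor)
  finally show ?thesis .
qed

subsection \<open>Conditionals and absolute continuity\<close>

lemma del_after_swap_reduce:
  assumes X: "X \<in> obj" and K: "K \<in> obj" and k: "arr k" "cod k = X \<odot> K"
  shows "(ide K \<otimes> del X) \<cdot> (\<sigma> X K \<cdot> k) = (del X \<otimes> ide K) \<cdot> k"
proof -
  have "(ide K \<otimes> del X) \<cdot> \<sigma> X K = del X \<otimes> ide K"
    using swap_natural[of "del X" "ide K" I K] X K by simp
  then show ?thesis
    by (rule comp_reduce) (use X K k in simp_all)
qed

lemma margR_in_hom: "f \<in> hom A (X \<odot> K) \<Longrightarrow> X \<in> obj \<Longrightarrow> K \<in> obj \<Longrightarrow> margR C X K f \<in> hom A K"
  unfolding margR_def using tensor_in_hom[OF del_in_hom ide_in_hom, of X K] by auto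

lemma is_condR_iff:
  assumes A: "A \<in> obj" and Y: "Y \<in> obj" and H: "H \<in> obj" and r: "r \<in> hom A (Y \<odot> H)"
  shows "is_condR C A Y H r e \<longleftrightarrow> e \<in> hom (H \<odot> A) Y \<and>
     \<sigma> Y H \<cdot> r = (ide H \<otimes> e) \<cdot> (copy H \<otimes> ide A) \<cdot> (margR C Y H r \<otimes> ide A) \<cdot> copy A"
proof -
  have "margL C H Y (\<sigma> Y H \<cdot> r) = margR C Y H r"
    unfolding margL_def margR_def using in_homD[OF r] A Y H by (simp add: del_after_swap_reduce)
  then show ?thesis
    unfolding is_condR_def is_condL_def by simp
qed

lemma is_condR_state_iff:
  assumes X: "X \<in> obj" and K: "K \<in> obj" and p: "p \<in> hom I (X \<odot> K)"
  shows "is_condR C I X K p c \<longleftrightarrow> c \<in> hom K X \<and> \<sigma> X K \<cdot> p = pair C K (ide K) c \<cdot> margR C X K p"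
proof (cases "c \<in> hom K X")
  case True
  then show ?thesis
    unfolding is_condR_iff[OF unit_obj X K p] pair_def
    using in_homD[OF True] in_homD[OF margR_in_hom[OF p X K]] K by simp
qed (use K in \<open>simp add: is_condR_iff[OF unit_obj X K p]\<close>)

lemma pair_ide_marginal:
  assumes K: "K \<in> obj" and c: "c \<in> hom K X"
  shows "(del K \<otimes> ide X) \<cdot> pair C K (ide K) c = c"
proof -
  have X: "X \<in> obj"
    using c hom_objs by blast
  have "(del K \<otimes> ide X) \<cdot> pair C K (ide K) c = (del K \<otimes> c) \<cdot> copy K"
    unfolding pair_def using in_homD[OF c] K X by (simp add: tensor_comp_reduce)
  also have "\<dots> = c \<cdot> (del K \<otimes> ide K) \<cdot> copy K"
    using interchange[of "del K" "ide I" "ide K" c] in_homD[OF c] K X by simp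
  also have "\<dots> = c"
    using copy_counit_left[OF K] in_homD[OF c] K by simp
  finally show ?thesis .
qed

lemma condR_posterior_unique:
  assumes X: "X \<in> obj" and K: "K \<in> obj" and p: "p \<in> hom I (X \<odot> K)"
    and c: "is_condR C I X K p c" and c': "is_condR C I X K p c'"
    and ac: "abs_cont C K ob (margR C X K p)" and ob: "ob \<in> hom I K"
  shows "c \<cdot> ob = c' \<cdot> ob"
proof -
  have ct: "c \<in> hom K X" and ct': "c' \<in> hom K X"
    and "\<sigma> X K \<cdot> p = pair C K (ide K) c \<cdot> margR C X K p"
    and "\<sigma> X K \<cdot> p = pair C K (ide K) c' \<cdot> margR C X K p"
    using c c' is_condR_state_iff[OF X K p] by auto
  then have "as_eq C K (margR C X K p) c c'"
    unfolding as_eq_def by simp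
  then have "as_eq C K ob c c'"
    using ac X ct ct' unfolding abs_cont_def by blast
  then have eq: "pair C K (ide K) c \<cdot> ob = pair C K (ide K) c' \<cdot> ob"
    unfolding as_eq_def .
  have pair_in_hom: "pair C K (ide K) d \<in> hom K (K \<odot> X)" if "d \<in> hom K X" for d
    unfolding pair_def using that K X by blast
  have "c \<cdot> ob = (del K \<otimes> ide X) \<cdot> (pair C K (ide K) c \<cdot> ob)"
    using comp_reduce[OF pair_ide_marginal[OF K ct], of ob] in_homD[OF pair_in_hom[OF ct]] in_homD[OF ob] K X
    by simp
  also have "\<dots> = c' \<cdot> ob"
    using comp_reduce[OF pair_ide_marginal[OF K ct'], of ob] in_homD[OF pair_in_hom[OF ct']] in_homD[OF ob] K X eq
    by simp
  finally show ?thesis .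
qed

lemma pair_comp_deterministic:
  assumes s: "s \<in> hom A B" and det: "copy B \<cdot> s = (s \<otimes> s) \<cdot> copy A"
    and x: "x \<in> hom I A" and F: "F \<in> hom B Z"
  shows "pair C B (ide B) F \<cdot> (s \<cdot> x) = (s \<otimes> ide Z) \<cdot> (pair C A (ide A) (F \<cdot> s) \<cdot> x)"
proof -
  note h = in_homD[OF s] in_homD[OF x] in_homD[OF F]
  have A: "A \<in> obj" and B: "B \<in> obj" and Z: "Z \<in> obj"
    using s F hom_objs by auto
  have "copy B \<cdot> (s \<cdot> x) = (s \<otimes> s) \<cdot> (copy A \<cdot> x)"
    using comp_reduce[OF det] h A B by simp
  then show ?thesis
    unfolding pair_def using h A B Z by (simp add: tensor_comp_reduce)
qed

lemma abs_cont_transport: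
  assumes s: "s \<in> hom A B" and det: "copy B \<cdot> s = (s \<otimes> s) \<cdot> copy A"
    and t: "t \<in> hom B A" and ts: "t \<cdot> s = ide A"
    and x: "x \<in> hom I A" and y: "y \<in> hom I A" and ac: "abs_cont C A x y"
  shows "abs_cont C B (s \<cdot> x) (s \<cdot> y)"
  unfolding abs_cont_def
proof (intro ballI impI)
  fix Z F G
  assume Z: "Z \<in> obj" and F: "F \<in> hom B Z" and G: "G \<in> hom B Z"
    and e: "as_eq C B (s \<cdot> y) F G"
  have A: "A \<in> obj"
    using s hom_objs by auto
  have Fs: "F \<cdot> s \<in> hom A Z" and Gs: "G \<cdot> s \<in> hom A Z"
    using F G s by auto
  have retract: "(t \<otimes> ide Z) \<cdot> ((s \<otimes> ide Z) \<cdot> P) = P" if P: "P \<in> hom I (A \<odot> Z)" for P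
    using tensor_comp_reduce[of s t "ide Z" "ide Z" P] ts in_homD[OF s] in_homD[OF t] in_homD[OF P] Z A
    by simp
  have pair_in_hom: "pair C A (ide A) H \<cdot> y \<in> hom I (A \<odot> Z)" if "H \<in> hom A Z" for H
    unfolding pair_def using that y A Z by blast
  have "(s \<otimes> ide Z) \<cdot> (pair C A (ide A) (F \<cdot> s) \<cdot> y) = (s \<otimes> ide Z) \<cdot> (pair C A (ide A) (G \<cdot> s) \<cdot> y)"
    using e pair_comp_deterministic[OF s det y F] pair_comp_deterministic[OF s det y G]
    unfolding as_eq_def by simp
  then have "pair C A (ide A) (F \<cdot> s) \<cdot> y = pair C A (ide A) (G \<cdot> s) \<cdot> y"
    using retract[OF pair_in_hom[OF Fs]] retract[OF pair_in_hom[OF Gs]] by metis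
  then have "as_eq C A x (F \<cdot> s) (G \<cdot> s)"
    using ac Z Fs Gs unfolding abs_cont_def as_eq_def by blast
  then show "as_eq C B (s \<cdot> x) F G"
    unfolding as_eq_def using pair_comp_deterministic[OF s det x F] pair_comp_deterministic[OF s det x G]
    by simp
qed

lemma abs_cont_swap_iff:
  assumes A: "A \<in> obj" and B: "B \<in> obj" and x: "x \<in> hom I (A \<odot> B)" and y: "y \<in> hom I (A \<odot> B)"
  shows "abs_cont C (B \<odot> A) (\<sigma> A B \<cdot> x) (\<sigma> A B \<cdot> y) \<longleftrightarrow> abs_cont C (A \<odot> B) x y"
proof
  show "abs_cont C (A \<odot> B) x y \<Longrightarrow> abs_cont C (B \<odot> A) (\<sigma> A B \<cdot> x) (\<sigma> A B \<cdot> y)"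
    by (rule abs_cont_transport[OF swap_in_hom[OF A B] swap_deterministic[OF A B]
          swap_in_hom[OF B A] swap_inverse[OF A B] x y])
  have "\<sigma> A B \<cdot> x \<in> hom I (B \<odot> A)" and "\<sigma> A B \<cdot> y \<in> hom I (B \<odot> A)"
    using x y A B by auto
  moreover assume "abs_cont C (B \<odot> A) (\<sigma> A B \<cdot> x) (\<sigma> A B \<cdot> y)"
  ultimately have "abs_cont C (A \<odot> B) (\<sigma> B A \<cdot> (\<sigma> A B \<cdot> x)) (\<sigma> B A \<cdot> (\<sigma> A B \<cdot> y))"
    by (rule abs_cont_transport[OF swap_in_hom[OF B A] swap_deterministic[OF B A]
          swap_in_hom[OF A B] swap_inverse[OF B A]])
  then show "abs_cont C (A \<odot> B) x y"
    using in_homD[OF x] in_homD[OF y] A B by simp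
qed

subsection \<open>Composites of inference problems\<close>

lemma condR_state_decomp:
  assumes X: "X \<in> obj" and K: "K \<in> obj" and p: "p \<in> hom I (X \<odot> K)" and c: "is_condR C I X K p c"
  shows "p = (c \<otimes> ide K) \<cdot> (copy K \<cdot> margR C X K p)"
proof -
  have ct: "c \<in> hom K X" and ce: "\<sigma> X K \<cdot> p = pair C K (ide K) c \<cdot> margR C X K p"
    using c is_condR_state_iff[OF X K p] by auto
  note h = in_homD[OF p] in_homD[OF ct] in_homD[OF margR_in_hom[OF p X K]]
  have "p = \<sigma> K X \<cdot> (\<sigma> X K \<cdot> p)"
    using h X K by simp
  also have "\<dots> = \<sigma> K X \<cdot> ((ide K \<otimes> c) \<cdot> (copy K \<cdot> margR C X K p))"
    using ce h X K unfolding pair_def by simp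
  also have "\<dots> = (c \<otimes> ide K) \<cdot> (\<sigma> K K \<cdot> (copy K \<cdot> margR C X K p))"
    using comp_reduce[OF swap_natural[of "ide K" c K X]] h X K by simp
  also have "\<dots> = (c \<otimes> ide K) \<cdot> (copy K \<cdot> margR C X K p)"
    using h X K by simp
  finally show ?thesis .
qed

lemma margR_tensor_ide:
  assumes g: "arr g" "cod g = Y \<odot> H" and Y: "Y \<in> obj" and H: "H \<in> obj" and K: "K \<in> obj"
  shows "(del Y \<otimes> ide (H \<odot> K)) \<cdot> (g \<otimes> ide K) = margR C Y H g \<otimes> ide K"
proof -
  have "(del Y \<otimes> ide (H \<odot> K)) \<cdot> (g \<otimes> ide K) = ((del Y \<otimes> ide H) \<otimes> ide K) \<cdot> (g \<otimes> ide K)"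
    using Y H K by simp
  also have "\<dots> = margR C Y H g \<otimes> (ide K \<cdot> ide K)"
    unfolding margR_def by (rule tensor_comp) (use g Y H K in simp_all)
  finally show ?thesis
    using K by simp
qed

lemma obs_comp_state_in_hom:
  assumes "Y \<in> obj" "H \<in> obj" "K \<in> obj" "p \<in> hom I (X \<odot> K)" "f \<in> hom X (Y \<odot> H)"
  shows "(f \<otimes> ide K) \<cdot> p \<in> hom I (Y \<odot> H \<odot> K)"
  using assms by (metis comp_in_hom ide_in_hom tensor_in_hom tensor_ob_assoc)

lemma obs_comp_via_condR:
  assumes X: "X \<in> obj" and Y: "Y \<in> obj" and H: "H \<in> obj" and K: "K \<in> obj"
    and p: "p \<in> hom I (X \<odot> K)" and f: "f \<in> hom X (Y \<odot> H)" and c: "is_condR C I X K p c"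
  shows "(f \<otimes> ide K) \<cdot> p = ((f \<cdot> c) \<otimes> ide K) \<cdot> (copy K \<cdot> margR C X K p)"
    and "margR C Y (H \<odot> K) ((f \<otimes> ide K) \<cdot> p) = (margR C Y H (f \<cdot> c) \<otimes> ide K) \<cdot> (copy K \<cdot> margR C X K p)"
    and "\<sigma> H K \<cdot> margR C Y (H \<odot> K) ((f \<otimes> ide K) \<cdot> p) = pair C K (ide K) (margR C Y H (f \<cdot> c)) \<cdot> margR C X K p"
proof -
  have ct: "c \<in> hom K X"
    using c is_condR_state_iff[OF X K p] by auto
  have mt: "margR C Y H (f \<cdot> c) \<in> hom K H"
    using margR_in_hom f ct Y H by blast
  note h = in_homD[OF p] in_homD[OF ct] in_homD[OF margR_in_hom[OF p X K]] in_homD[OF f] in_homD[OF mt]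
  show "(f \<otimes> ide K) \<cdot> p = ((f \<cdot> c) \<otimes> ide K) \<cdot> (copy K \<cdot> margR C X K p)"
    by (subst condR_state_decomp[OF X K p c])
      (use tensor_comp_reduce[of c f "ide K" "ide K" "copy K \<cdot> margR C X K p"] h X Y H K in simp)
  then show marg: "margR C Y (H \<odot> K) ((f \<otimes> ide K) \<cdot> p) = (margR C Y H (f \<cdot> c) \<otimes> ide K) \<cdot> (copy K \<cdot> margR C X K p)"
    unfolding margR_def[of C Y "H \<odot> K"]
    using comp_reduce[OF margR_tensor_ide[of "f \<cdot> c" Y H K]] h X Y H K by simp
  show "\<sigma> H K \<cdot> margR C Y (H \<odot> K) ((f \<otimes> ide K) \<cdot> p) = pair C K (ide K) (margR C Y H (f \<cdot> c)) \<cdot> margR C X K p"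
    unfolding marg pair_def
    using comp_reduce[OF swap_natural[of "margR C Y H (f \<cdot> c)" "ide K" H K]] h H K by simp
qed

text \<open>The key step is coassociativity of copy K.\<close>

lemma condR_obs_comp:
  assumes X: "X \<in> obj" and Y: "Y \<in> obj" and H: "H \<in> obj" and K: "K \<in> obj"
    and p: "p \<in> hom I (X \<odot> K)" and f: "f \<in> hom X (Y \<odot> H)" and c: "is_condR C I X K p c"
    and e: "is_condR C K Y H (f \<cdot> c) e"
  shows "is_condR C I Y (H \<odot> K) ((f \<otimes> ide K) \<cdot> p) e"
proof -
  have rt: "f \<cdot> c \<in> hom K (Y \<odot> H)"
    using c is_condR_state_iff[OF X K p] f by auto
  define r where "r = f \<cdot> c"
  define rH where "rH = margR C Y H r"
  define m where "m = margR C X K p"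
  have et: "e \<in> hom (H \<odot> K) Y"
    and hyp: "\<sigma> Y H \<cdot> r = (ide H \<otimes> e) \<cdot> ((copy H \<otimes> ide K) \<cdot> ((rH \<otimes> ide K) \<cdot> copy K))"
    using e is_condR_iff[OF K Y H rt] unfolding r_def rH_def by auto
  note h = in_homD[OF rt[folded r_def]] in_homD[OF margR_in_hom[OF rt Y H, folded r_def, folded rH_def]]
    in_homD[OF margR_in_hom[OF p X K, folded m_def]] in_homD[OF et]
  have "\<sigma> Y (H \<odot> K) \<cdot> ((r \<otimes> ide K) \<cdot> (copy K \<cdot> m))
      = (ide H \<otimes> \<sigma> Y K) \<cdot> (((\<sigma> Y H \<cdot> r) \<otimes> ide K) \<cdot> (copy K \<cdot> m))"
    using h Y H K by (simp add: swap_tensor_right tensor_comp_reduce)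
  also have "\<dots> = (ide H \<otimes> \<sigma> Y K) \<cdot> ((ide H \<otimes> e \<otimes> ide K) \<cdot> ((copy H \<otimes> ide (K \<odot> K)) \<cdot>
      ((rH \<otimes> ide (K \<odot> K)) \<cdot> ((copy K \<otimes> ide K) \<cdot> (copy K \<cdot> m)))))"
    unfolding hyp using h Y H K by (simp add: comp_tensor_ide)
  also have "\<dots> = (ide H \<otimes> \<sigma> Y K) \<cdot> ((ide H \<otimes> e \<otimes> ide K) \<cdot> ((copy H \<otimes> ide (K \<odot> K)) \<cdot>
      ((rH \<otimes> ide (K \<odot> K)) \<cdot> ((ide K \<otimes> copy K) \<cdot> (copy K \<cdot> m)))))"
    using h Y H K by (simp add: copy_coassoc_reduce)
  also have "\<dots> = (ide H \<otimes> ((ide K \<otimes> e) \<cdot> \<sigma> (H \<odot> K) K)) \<cdot> (((copy H \<cdot> rH) \<otimes> copy K) \<cdot> (copy K \<cdot> m))"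
    using swap_natural[of e "ide K" Y K] h Y H K by (simp add: tensor_comp_reduce tensor_comp)
  also have "\<dots> = (ide (H \<odot> K) \<otimes> e) \<cdot> ((ide H \<otimes> \<sigma> H K \<otimes> ide K) \<cdot>
      ((ide (H \<odot> H) \<otimes> \<sigma> K K) \<cdot> (((copy H \<cdot> rH) \<otimes> copy K) \<cdot> (copy K \<cdot> m))))"
    using h Y H K by (simp add: swap_tensor_left ide_tensor_comp)
  also have "\<dots> = (ide (H \<odot> K) \<otimes> e) \<cdot> ((ide H \<otimes> \<sigma> H K \<otimes> ide K) \<cdot> ((copy H \<otimes> copy K) \<cdot> ((rH \<otimes> ide K) \<cdot> (copy K \<cdot> m))))"
    using h Y H K by (simp add: tensor_comp_reduce)
  also have "\<dots> = pair C (H \<odot> K) (ide (H \<odot> K)) e \<cdot> ((rH \<otimes> ide K) \<cdot> (copy K \<cdot> m))"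
    unfolding pair_def using h Y H K by (simp add: copy_tensor)
  finally show ?thesis
    unfolding is_condR_state_iff[OF Y tensor_in_obj[OF H K] obs_comp_state_in_hom[OF Y H K p f]]
    using et obs_comp_via_condR[OF X Y H K p f c] unfolding r_def rH_def m_def by simp
qed

lemma deterministic_stateD: "deterministic C I K ob \<Longrightarrow> ob \<in> hom I K \<and> copy K \<cdot> ob = ob \<otimes> ob"
  unfolding deterministic_def using in_homD[of ob I K] by auto

lemma condR_at_deterministic:
  assumes Y: "Y \<in> obj" and H: "H \<in> obj" and K: "K \<in> obj"
    and rt: "r \<in> hom K (Y \<odot> H)" and e: "is_condR C K Y H r e" and dob: "deterministic C I K ob"
  shows "is_condR C I Y H (r \<cdot> ob) (e \<cdot> (ide H \<otimes> ob))"
proof -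
  have ob: "ob \<in> hom I K" and copy_ob: "copy K \<cdot> ob = ob \<otimes> ob"
    using deterministic_stateD[OF dob] by auto
  define rH where "rH = margR C Y H r"
  have et: "e \<in> hom (H \<odot> K) Y"
    and hyp: "\<sigma> Y H \<cdot> r = (ide H \<otimes> e) \<cdot> (copy H \<otimes> ide K) \<cdot> (rH \<otimes> ide K) \<cdot> copy K"
    using e is_condR_iff[OF K Y H rt] unfolding rH_def by auto
  note h = in_homD[OF rt] in_homD[OF margR_in_hom[OF rt Y H, folded rH_def]] in_homD[OF et] in_homD[OF ob]
  have slide: "rH \<otimes> ob = (ide H \<otimes> ob) \<cdot> rH"
    using tensor_slide[of rH ob] h by simp
  have "\<sigma> Y H \<cdot> (r \<cdot> ob) = (ide H \<otimes> e) \<cdot> ((copy H \<otimes> ide K) \<cdot> ((rH \<otimes> ide K) \<cdot> ((ide K \<otimes> ob) \<cdot> ob)))"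
    using comp_reduce[OF hyp] copy_ob tensor_states[OF ob ob] h Y H K by simp
  also have "\<dots> = (ide H \<otimes> e) \<cdot> ((copy H \<otimes> ide K) \<cdot> ((ide H \<otimes> ob) \<cdot> (rH \<cdot> ob)))"
    using tensor_comp_reduce[of "ide K" rH ob "ide K" ob] slide h Y H K by simp
  also have "\<dots> = (ide H \<otimes> e) \<cdot> ((ide (H \<odot> H) \<otimes> ob) \<cdot> (copy H \<cdot> (rH \<cdot> ob)))"
    using tensor_comp_reduce[of "ide H" "copy H" ob "ide K" "rH \<cdot> ob"] tensor_slide[of "copy H" ob] h Y H K
    by simp
  also have "\<dots> = (ide H \<otimes> (e \<cdot> (ide H \<otimes> ob))) \<cdot> (copy H \<cdot> (rH \<cdot> ob))"
  proof -
    have "(ide H \<otimes> e) \<cdot> (ide (H \<odot> H) \<otimes> ob) = ide H \<otimes> (e \<cdot> (ide H \<otimes> ob))"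
      using tensor_comp[of "ide H" "ide H" "ide H \<otimes> ob" e] h H K by simp
    then show ?thesis
      by (rule comp_reduce) (use h H K in simp_all)
  qed
  also have "\<dots> = pair C H (ide H) (e \<cdot> (ide H \<otimes> ob)) \<cdot> margR C Y H (r \<cdot> ob)"
    unfolding pair_def rH_def margR_def using h Y H K by simp
  finally have "\<sigma> Y H \<cdot> (r \<cdot> ob) = pair C H (ide H) (e \<cdot> (ide H \<otimes> ob)) \<cdot> margR C Y H (r \<cdot> ob)" .
  moreover have "e \<cdot> (ide H \<otimes> ob) \<in> hom H Y"
    using h H K by (intro in_homI) simp_all
  ultimately show ?thesis
    unfolding is_condR_state_iff[OF Y H comp_in_hom[OF ob rt]] by simp
qed

lemma obs_comp_succeeds_iff:
  assumes ps: "precise_supports C" and X: "X \<in> obj" and Y: "Y \<in> obj" and H: "H \<in> obj" and K: "K \<in> obj"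
    and p: "p \<in> hom I (X \<odot> K)" and f: "f \<in> hom X (Y \<odot> H)" and c: "is_condR C I X K p c"
    and dob: "deterministic C I K ob" and dv: "deterministic C I H v"
  shows "abs_cont C (H \<odot> K) (v \<otimes> ob) (margR C Y (H \<odot> K) ((f \<otimes> ide K) \<cdot> p))
     \<longleftrightarrow> abs_cont C K ob (margR C X K p) \<and> abs_cont C H v (margR C Y H (f \<cdot> (c \<cdot> ob)))"
proof -
  have ob: "ob \<in> hom I K" and v: "v \<in> hom I H"
    using deterministic_stateD dob dv by auto
  have ct: "c \<in> hom K X"
    using c is_condR_state_iff[OF X K p] by auto
  have mt: "margR C Y H (f \<cdot> c) \<in> hom K H"
    using margR_in_hom f ct Y H by blast
  have Mt: "margR C Y (H \<odot> K) ((f \<otimes> ide K) \<cdot> p) \<in> hom I (H \<odot> K)"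
    using margR_in_hom[OF obs_comp_state_in_hom[OF Y H K p f]] Y H K by blast
  have "\<sigma> H K \<cdot> (v \<otimes> ob) = ob \<otimes> v"
    using swap_natural[of v ob H K] in_homD[OF v] in_homD[OF ob] by simp
  then have "abs_cont C (H \<odot> K) (v \<otimes> ob) (margR C Y (H \<odot> K) ((f \<otimes> ide K) \<cdot> p))
     \<longleftrightarrow> abs_cont C (K \<odot> H) (ob \<otimes> v) (pair C K (ide K) (margR C Y H (f \<cdot> c)) \<cdot> margR C X K p)"
    using abs_cont_swap_iff[OF H K state_tensor_in_hom[OF v ob] Mt] obs_comp_via_condR(3)[OF X Y H K p f c] by simp
  also have "\<dots> \<longleftrightarrow> abs_cont C K ob (margR C X K p) \<and> abs_cont C H v (margR C Y H (f \<cdot> c) \<cdot> ob)"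
    using ps[unfolded precise_supports_def] K H dob dv mt margR_in_hom[OF p X K] by blast
  also have "margR C Y H (f \<cdot> c) \<cdot> ob = margR C Y H (f \<cdot> (c \<cdot> ob))"
    unfolding margR_def using in_homD[OF f] in_homD[OF ct] in_homD[OF ob] Y H by simp
  finally show ?thesis .
qed

lemma obs_comp_eq:
  "obs_comp C Y (H, f, v) (K, p, ob) = (H \<odot> K, (f \<otimes> ide K) \<cdot> p, v \<otimes> ob)"
  unfolding obs_comp_def by simp

lemma obs_sim_sym: "obs_sim C X p q \<Longrightarrow> obs_sim C X q p"
  unfolding obs_sim_def succeeds_def by (cases p, cases q) (simp only: prod.case, metis)

lemma obs_sim_iff:
  assumes X: "X \<in> obj" and K: "K \<in> obj" and K': "K' \<in> obj"
    and p: "p \<in> hom I (X \<odot> K)" and p': "p' \<in> hom I (X \<odot> K')" and ob: "ob \<in> hom I K" and ob': "ob' \<in> hom I K'"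
    and c: "is_condR C I X K p c" and c': "is_condR C I X K' p' c'"
  shows "obs_sim C X (K, p, ob) (K', p', ob') \<longleftrightarrow>
    (abs_cont C K ob (margR C X K p) \<and> abs_cont C K' ob' (margR C X K' p') \<and> c \<cdot> ob = c' \<cdot> ob') \<or>
    (\<not> abs_cont C K ob (margR C X K p) \<and> \<not> abs_cont C K' ob' (margR C X K' p'))"
proof -
  have "d \<cdot> ob = c \<cdot> ob" if "is_condR C I X K p d" "abs_cont C K ob (margR C X K p)" for d
    using condR_posterior_unique[OF X K p that(1) c that(2) ob] .
  moreover have "d \<cdot> ob' = c' \<cdot> ob'" if "is_condR C I X K' p' d" "abs_cont C K' ob' (margR C X K' p')" for d
    using condR_posterior_unique[OF X K' p' that(1) c' that(2) ob'] .
  ultimately have "abs_cont C K ob (margR C X K p) \<Longrightarrow> abs_cont C K' ob' (margR C X K' p') \<Longrightarrow>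
      (\<forall>d d'. is_condR C I X K p d \<longrightarrow> is_condR C I X K' p' d' \<longrightarrow> d \<cdot> ob = d' \<cdot> ob') \<longleftrightarrow> c \<cdot> ob = c' \<cdot> ob'"
    using c c' by metis
  then show ?thesis
    unfolding obs_sim_def succeeds_def prod.case by blast
qed

end

locale markov_category_with_conditionals = markov_category +
  assumes conditionals: "has_conditionals C"
begin

lemma condR_exists: "A \<in> obj \<Longrightarrow> X \<in> obj \<Longrightarrow> Y \<in> obj \<Longrightarrow> f \<in> hom A (X \<odot> Y) \<Longrightarrow> \<exists>c. is_condR C A X Y f c"
  using conditionals unfolding has_conditionals_def by blast

lemma obs_stateE:
  assumes X: "X \<in> obj" and p: "p \<in> obs_hom C I X"
  obtains K q ob c where "p = (K, q, ob)" "K \<in> obj" "q \<in> hom I (X \<odot> K)" "deterministic C I K ob"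
    "ob \<in> hom I K" "is_condR C I X K q c"
proof -
  obtain K q ob where pq: "p = (K, q, ob)"
    by (cases p)
  with p have K: "K \<in> obj" and q: "q \<in> hom I (X \<odot> K)" and ob: "deterministic C I K ob"
    unfolding obs_hom_def by auto
  moreover obtain c where "is_condR C I X K q c"
    using condR_exists[OF unit_obj X K q] by blast
  ultimately show thesis
    using that pq ob unfolding deterministic_def by blast
qed

lemma obs_sim_refl:
  assumes X: "X \<in> obj" and p: "p \<in> obs_hom C I X"
  shows "obs_sim C X p p"
proof -
  obtain K q ob c where "p = (K, q, ob)" "K \<in> obj" "q \<in> hom I (X \<odot> K)" "ob \<in> hom I K"
    "is_condR C I X K q c"
    using obs_stateE[OF X p] by metis
  then show ?thesis
    using obs_sim_iff[OF X] by simp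
qed

lemma obs_sim_trans:
  assumes X: "X \<in> obj" and p: "p \<in> obs_hom C I X" and q: "q \<in> obs_hom C I X" and r: "r \<in> obs_hom C I X"
    and pq: "obs_sim C X p q" and qr: "obs_sim C X q r"
  shows "obs_sim C X p r"
proof -
  obtain K1 q1 o1 c1 where p_eq: "p = (K1, q1, o1)" and 1: "K1 \<in> obj" "q1 \<in> hom I (X \<odot> K1)"
    "o1 \<in> hom I K1" "is_condR C I X K1 q1 c1"
    using obs_stateE[OF X p] by metis
  obtain K2 q2 o2 c2 where q_eq: "q = (K2, q2, o2)" and 2: "K2 \<in> obj" "q2 \<in> hom I (X \<odot> K2)"
    "o2 \<in> hom I K2" "is_condR C I X K2 q2 c2"
    using obs_stateE[OF X q] by metis
  obtain K3 q3 o3 c3 where r_eq: "r = (K3, q3, o3)" and 3: "K3 \<in> obj" "q3 \<in> hom I (X \<odot> K3)"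
    "o3 \<in> hom I K3" "is_condR C I X K3 q3 c3"
    using obs_stateE[OF X r] by metis
  show ?thesis
    using pq qr unfolding p_eq q_eq r_eq
    using obs_sim_iff[OF X 1(1) 2(1) 1(2) 2(2) 1(3) 2(3) 1(4) 2(4)]
      obs_sim_iff[OF X 2(1) 3(1) 2(2) 3(2) 2(3) 3(3) 2(4) 3(4)]
      obs_sim_iff[OF X 1(1) 3(1) 1(2) 3(2) 1(3) 3(3) 1(4) 3(4)]
    by metis
qed

lemma obs_comp_posterior:
  assumes X: "X \<in> obj" and Y: "Y \<in> obj" and H: "H \<in> obj" and K: "K \<in> obj"
    and p: "p \<in> hom I (X \<odot> K)" and f: "f \<in> hom X (Y \<odot> H)" and c: "is_condR C I X K p c"
    and dob: "deterministic C I K ob" and v: "v \<in> hom I H"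
    and e0: "is_condR C I Y H (f \<cdot> (c \<cdot> ob)) e0" and vac: "abs_cont C H v (margR C Y H (f \<cdot> (c \<cdot> ob)))"
  obtains e where "is_condR C I Y (H \<odot> K) ((f \<otimes> ide K) \<cdot> p) e" and "e \<cdot> (v \<otimes> ob) = e0 \<cdot> v"
proof -
  have ob: "ob \<in> hom I K"
    using deterministic_stateD[OF dob] by simp
  have ct: "c \<in> hom K X"
    using c is_condR_state_iff[OF X K p] by auto
  have rt: "f \<cdot> c \<in> hom K (Y \<odot> H)"
    using f ct by blast
  obtain e where e: "is_condR C K Y H (f \<cdot> c) e"
    using condR_exists[OF K Y H rt] by blast
  have et: "e \<in> hom (H \<odot> K) Y"
    using e is_condR_iff[OF K Y H rt] by simp
  have "is_condR C I Y H (f \<cdot> (c \<cdot> ob)) (e \<cdot> (ide H \<otimes> ob))"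
    using condR_at_deterministic[OF Y H K rt e dob] in_homD[OF f] in_homD[OF ct] in_homD[OF ob] X K by simp
  then have "(e \<cdot> (ide H \<otimes> ob)) \<cdot> v = e0 \<cdot> v"
    using condR_posterior_unique[OF Y H _ _ e0 vac v] f ct ob by blast
  moreover have "e \<cdot> (v \<otimes> ob) = (e \<cdot> (ide H \<otimes> ob)) \<cdot> v"
    using tensor_states[OF v ob] in_homD[OF v] in_homD[OF ob] in_homD[OF et] H K by simp
  ultimately show thesis
    using that condR_obs_comp[OF X Y H K p f c e] by simp
qed

lemma obs_comp_sim_of_same_posterior:
  assumes ps: "precise_supports C" and X: "X \<in> obj" and Y: "Y \<in> obj" and H: "H \<in> obj"
    and K: "K \<in> obj" and K': "K' \<in> obj" and \<psi>: "\<psi> \<in> hom I (X \<odot> K)" and \<psi>': "\<psi>' \<in> hom I (X \<odot> K')"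
    and f: "f \<in> hom X (Y \<odot> H)" and c: "is_condR C I X K \<psi> c" and c': "is_condR C I X K' \<psi>' c'"
    and dob: "deterministic C I K ob" and dob': "deterministic C I K' ob'" and dv: "deterministic C I H v"
    and S: "abs_cont C K ob (margR C X K \<psi>)" and S': "abs_cont C K' ob' (margR C X K' \<psi>')"
    and eq: "c \<cdot> ob = c' \<cdot> ob'" and T: "abs_cont C H v (margR C Y H (f \<cdot> (c \<cdot> ob)))"
  shows "obs_sim C Y (H \<odot> K, (f \<otimes> ide K) \<cdot> \<psi>, v \<otimes> ob) (H \<odot> K', (f \<otimes> ide K') \<cdot> \<psi>', v \<otimes> ob')"
proof -
  have ob: "ob \<in> hom I K" and ob': "ob' \<in> hom I K'" and v: "v \<in> hom I H"
    using deterministic_stateD dob dob' dv by auto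
  have "f \<cdot> (c \<cdot> ob) \<in> hom I (Y \<odot> H)"
    using c is_condR_state_iff[OF X K \<psi>] f ob by blast
  then obtain e0 where e0: "is_condR C I Y H (f \<cdot> (c \<cdot> ob)) e0"
    using condR_exists[OF unit_obj Y H] by blast
  obtain e where e: "is_condR C I Y (H \<odot> K) ((f \<otimes> ide K) \<cdot> \<psi>) e" and ev: "e \<cdot> (v \<otimes> ob) = e0 \<cdot> v"
    using obs_comp_posterior[OF X Y H K \<psi> f c dob v e0 T] by blast
  obtain e' where e': "is_condR C I Y (H \<odot> K') ((f \<otimes> ide K') \<cdot> \<psi>') e'" and ev': "e' \<cdot> (v \<otimes> ob') = e0 \<cdot> v"
    using obs_comp_posterior[OF X Y H K' \<psi>' f c' dob' v] e0 T eq by auto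
  show ?thesis
    unfolding obs_sim_iff[OF Y tensor_in_obj[OF H K] tensor_in_obj[OF H K']
        obs_comp_state_in_hom[OF Y H K \<psi> f] obs_comp_state_in_hom[OF Y H K' \<psi>' f]
        state_tensor_in_hom[OF v ob] state_tensor_in_hom[OF v ob'] e e']
    using obs_comp_succeeds_iff[OF ps X Y H K \<psi> f c dob dv]
      obs_comp_succeeds_iff[OF ps X Y H K' \<psi>' f c' dob' dv] S S' T eq ev ev'
    by simp
qed

lemma obs_sim_obs_comp:
  assumes ps: "precise_supports C" and X: "X \<in> obj" and Y: "Y \<in> obj"
    and p: "p \<in> obs_hom C I X" and q: "q \<in> obs_hom C I X" and h: "h \<in> obs_hom C X Y"
    and pq: "obs_sim C X p q"
  shows "obs_sim C Y (obs_comp C Y h p) (obs_comp C Y h q)"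
proof -
  obtain K \<psi> ob c where p_eq: "p = (K, \<psi>, ob)" and K: "K \<in> obj" and \<psi>: "\<psi> \<in> hom I (X \<odot> K)"
    and dob: "deterministic C I K ob" and ob: "ob \<in> hom I K" and c: "is_condR C I X K \<psi> c"
    using obs_stateE[OF X p] by blast
  obtain K' \<psi>' ob' c' where q_eq: "q = (K', \<psi>', ob')" and K': "K' \<in> obj" and \<psi>': "\<psi>' \<in> hom I (X \<odot> K')"
    and dob': "deterministic C I K' ob'" and ob': "ob' \<in> hom I K'" and c': "is_condR C I X K' \<psi>' c'"
    using obs_stateE[OF X q] by blast
  obtain H f v where h_eq: "h = (H, f, v)" and H: "H \<in> obj" and f: "f \<in> hom X (Y \<odot> H)"
    and dv: "deterministic C I H v"
    using h unfolding obs_hom_def by auto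
  let ?S = "abs_cont C K ob (margR C X K \<psi>)" and ?S' = "abs_cont C K' ob' (margR C X K' \<psi>')"
  let ?T = "abs_cont C H v (margR C Y H (f \<cdot> (c \<cdot> ob)))"
  have sim: "(?S \<and> ?S' \<and> c \<cdot> ob = c' \<cdot> ob') \<or> (\<not> ?S \<and> \<not> ?S')"
    using pq obs_sim_iff[OF X K K' \<psi> \<psi>' ob ob' c c'] unfolding p_eq q_eq by simp
  show ?thesis
  proof (cases "?S \<and> ?T")
    case True
    then show ?thesis
      unfolding p_eq q_eq h_eq obs_comp_eq
      using obs_comp_sim_of_same_posterior[OF ps X Y H K K' \<psi> \<psi>' f c c' dob dob' dv] sim by blast
  next
    case False
    then have "\<not> abs_cont C (H \<odot> K) (v \<otimes> ob) (margR C Y (H \<odot> K) ((f \<otimes> ide K) \<cdot> \<psi>))"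
      and "\<not> abs_cont C (H \<odot> K') (v \<otimes> ob') (margR C Y (H \<odot> K') ((f \<otimes> ide K') \<cdot> \<psi>'))"
      using sim obs_comp_succeeds_iff[OF ps X Y H K \<psi> f c dob dv]
        obs_comp_succeeds_iff[OF ps X Y H K' \<psi>' f c' dob' dv] by auto
    then show ?thesis
      unfolding p_eq q_eq h_eq obs_comp_eq obs_sim_def succeeds_def by simp
  qed
qed

end

theorem theorem5p7:
  fixes C :: "('o, 'm) mcat"
  assumes "markov_cat C" and "has_conditionals C" and "precise_supports C"
  shows "\<forall>X\<in>Ob C.
      (\<forall>p\<in>obs_hom C (unt C) X. obs_sim C X p p) \<and>
      (\<forall>p\<in>obs_hom C (unt C) X. \<forall>q\<in>obs_hom C (unt C) X. obs_sim C X p q \<longrightarrow> obs_sim C X q p) \<and>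
      (\<forall>p\<in>obs_hom C (unt C) X. \<forall>q\<in>obs_hom C (unt C) X. \<forall>r\<in>obs_hom C (unt C) X.
          obs_sim C X p q \<longrightarrow> obs_sim C X q r \<longrightarrow> obs_sim C X p r) \<and>
      (\<forall>Y\<in>Ob C. \<forall>p\<in>obs_hom C (unt C) X. \<forall>q\<in>obs_hom C (unt C) X. \<forall>h\<in>obs_hom C X Y.
          obs_sim C X p q \<longrightarrow> obs_sim C Y (obs_comp C Y h p) (obs_comp C Y h q))"
proof -
  interpret markov_category_with_conditionals C
    using assms(1,2) by unfold_locales
  show ?thesis
  proof (intro ballI conjI impI)
    show "obs_sim C X p p" if "X \<in> Ob C" "p \<in> obs_hom C I X" for X p
      using that by (rule obs_sim_refl)
    show "obs_sim C X q p" if "obs_sim C X p q" for X p q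
      using that by (rule obs_sim_sym)
    show "obs_sim C X p r" if "X \<in> Ob C" "p \<in> obs_hom C I X" "q \<in> obs_hom C I X"
      "r \<in> obs_hom C I X" "obs_sim C X p q" "obs_sim C X q r" for X p q r
      using that by (rule obs_sim_trans)
    show "obs_sim C Y (obs_comp C Y h p) (obs_comp C Y h q)" if "X \<in> Ob C" "Y \<in> Ob C"
      "p \<in> obs_hom C I X" "q \<in> obs_hom C I X" "h \<in> obs_hom C X Y" "obs_sim C X p q" for X Y p q h
      using that by (rule obs_sim_obs_comp[OF assms(3)])
  qed
qed

end
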